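(* Let $p$ be a positive integer, $L,E,\sigma>0$ with $L,E\in 2^{-p}\mathbb{Z}$, and $\epsilon>0$ with $\sigma\ge L/\epsilon$. Then the truncated cumulative Laplace mechanism $\mathcal{M}^{(\mathtt{CLap})}_{L,E,\sigma,p}:\mathcal{A}_{p,E}\to\mathcal{B}_{p,L+E}$ is $\epsilon$-differentially private in the sense that for all $x_1,x_2\in\mathcal{A}_{p,E}$ and all $y\in\mathcal{B}_{p,L+E}$, $f^{(\mathtt{CLap})}_{x_1,\sigma}(y)\le e^{\epsilon}f^{(\mathtt{CLap})}_{x_2,\sigma}(y)$.
   Context: For $p\in\mathbb{Z}_{>0}$ and $B>0$, $2^{-p}\mathbb{Z}=\{a/2^p: a\in\mathbb{Z}\}$, $\mathcal{A}_{p,B}:=[-B,B]\cap 2^{-p}\mathbb{Z}$ and $\mathcal{B}_{p,B}:=\mathcal{A}_{p,B}\setminus\{B\}$. The truncated cumulative Laplace mechanism $\mathcal{M}^{(\mathtt{CLap})}_{L,E,\sigma,p}$ with parameters $L,E,\sigma>0$ maps $x\in\mathcal{A}_{p,E}$ to $y\in\mathcal{B}_{p,L+E}$ with probability $f^{(\mathtt{CLap})}_{x,\sigma}(y)=\frac{1}{\lambda^{(\mathtt{CLap})}_{L,E,\sigma}}\int_y^{y+2^{-p}}e^{-\min(|r-x|,L)/\sigma}dr$, where $\lambda^{(\mathtt{CLap})}_{L,E,\sigma}=\sum_{y\in\mathcal{B}_{p,L+E}}\int_y^{y+2^{-p}}e^{-\min(|r-x|,L)/\sigma}dr$ is the normalizing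 constant (independent of $x$). *)

theory Defs
  imports "HOL-Analysis.Analysis"
begin

definition dyadic_grid :: "nat \<Rightarrow> real set" where
  "dyadic_grid p = {r. \<exists>a::int. r = real_of_int a / 2 ^ p}"

definition setA :: "nat \<Rightarrow> real \<Rightarrow> real set" where
  "setA p B = {-B..B} \<inter> dyadic_grid p"

definition setB :: "nat \<Rightarrow> real \<Rightarrow> real set" where
  "setB p B = setA p B - {B}"

definition clap_mass :: "real \<Rightarrow> real \<Rightarrow> nat \<Rightarrow> real \<Rightarrow> real \<Rightarrow> real" where
  "clap_mass L \<sigma> p x y =
     integral {y..y + 1 / 2 ^ p} (\<lambda>r. exp (- min \<bar>r - x\<bar> L / \<sigma>))"

definition clap_lambda :: "real \<Rightarrow> real \<Rightarrow> real \<Rightarrow> nat \<Rightarrow> real \<Rightarrow> real" where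
  "clap_lambda L E \<sigma> p x = (\<Sum>y\<in>setB p (L + E). clap_mass L \<sigma> p x y)"

definition clap_f :: "real \<Rightarrow> real \<Rightarrow> real \<Rightarrow> nat \<Rightarrow> real \<Rightarrow> real \<Rightarrow> real" where
  "clap_f L E \<sigma> p x y = clap_mass L \<sigma> p x y / clap_lambda L E \<sigma> p x"

end

theory Submission
  imports Defs
begin

text \<open>The unnormalised density g_x(r) = exp(-min(|r - x|, L)/\<sigma>) takes values in
  [exp(-L/\<sigma>), 1], so g_{x1} \<le> exp(L/\<sigma>) g_{x2} pointwise and hence binwise.
  The normaliser does not depend on x: the bins tile [-(L+E), L+E], on which g_x equals the
  constant exp(-L/\<sigma>) outside the window [x - L, x + L] of fixed length 2L, and that window
  lies inside the interval because |x| \<le> E.\<close>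

definition clap_density :: "real \<Rightarrow> real \<Rightarrow> real \<Rightarrow> real \<Rightarrow> real" where
  "clap_density L \<sigma> x r = exp (- min \<bar>r - x\<bar> L / \<sigma>)"

lemma clap_mass_eq_integral_density:
  "clap_mass L \<sigma> p x y = integral {y..y + 1 / 2 ^ p} (clap_density L \<sigma> x)"
  unfolding clap_mass_def clap_density_def ..

lemma continuous_on_clap_density: "continuous_on S (clap_density L \<sigma> x)"
  unfolding clap_density_def divide_inverse by (intro continuous_intros)

lemma clap_density_integrable: "clap_density L \<sigma> x integrable_on {a..b}"
  by (rule integrable_continuous_interval[OF continuous_on_clap_density])

lemma clap_mass_nonneg: "clap_mass L \<sigma> p x y \<ge> 0"
  unfolding clap_mass_eq_integral_density
  by (intro integral_nonneg clap_density_integrable) (simp add: clap_density_def)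

lemma clap_density_le_exp_mult:
  fixes L \<sigma> :: real
  assumes "L \<ge> 0" "\<sigma> > 0"
  shows "clap_density L \<sigma> x1 r \<le> exp (L / \<sigma>) * clap_density L \<sigma> x2 r"
proof -
  have "clap_density L \<sigma> x1 r \<le> 1"
    using assms by (simp add: clap_density_def)
  also have "1 = exp (L / \<sigma>) * exp (- L / \<sigma>)"
    by (simp add: exp_minus)
  also have "\<dots> \<le> exp (L / \<sigma>) * clap_density L \<sigma> x2 r"
    using assms by (simp add: clap_density_def divide_right_mono)
  finally show ?thesis .
qed

lemma clap_mass_le_exp_mult:
  fixes L \<sigma> :: real
  assumes "L \<ge> 0" "\<sigma> > 0"
  shows "clap_mass L \<sigma> p x1 y \<le> exp (L / \<sigma>) * clap_mass L \<sigma> p x2 y"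
proof -
  have "integral {y..y + 1 / 2 ^ p} (clap_density L \<sigma> x1)
      \<le> integral {y..y + 1 / 2 ^ p} (\<lambda>r. exp (L / \<sigma>) * clap_density L \<sigma> x2 r)"
    by (rule integral_le) (simp_all add: clap_density_integrable clap_density_le_exp_mult assms)
  then show ?thesis
    by (simp add: clap_mass_eq_integral_density)
qed

lemma sum_integral_consecutive_bins:
  fixes f :: "real \<Rightarrow> real" and q :: real and a :: int
  assumes "q > 0" and "\<And>u v. f integrable_on {u..v}"
  shows "(\<Sum>k\<in>{a..<a + int n}. integral {of_int k / q .. of_int k / q + 1 / q} f)
       = integral {of_int a / q .. (of_int a + real n) / q} f"
proof (induction n)
  case 0
  then show ?case by simp
next
  case (Suc n)
  have "integral {of_int a / q .. (of_int a + real n) / q} f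
      + integral {(of_int a + real n) / q .. (of_int a + real (Suc n)) / q} f
      = integral {of_int a / q .. (of_int a + real (Suc n)) / q} f"
    by (rule Henstock_Kurzweil_Integration.integral_combine)
      (use assms in \<open>auto simp: divide_right_mono\<close>)
  moreover have "{a..<a + int (Suc n)} = insert (a + int n) {a..<a + int n}"
    by auto
  moreover have "of_int (a + int n) / q + 1 / q = (of_int a + real (Suc n)) / q"
    by (simp add: add_divide_distrib)
  ultimately show ?case
    using Suc by (simp add: add.commute)
qed

lemma dyadic_grid_add:
  assumes "a \<in> dyadic_grid p" "b \<in> dyadic_grid p"
  shows "a + b \<in> dyadic_grid p"
proof -
  obtain i j :: int where "a = of_int i / 2 ^ p" "b = of_int j / 2 ^ p"
    using assms unfolding dyadic_grid_def by blast
  then have "a + b = of_int (i + j) / 2 ^ p"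
    by (simp add: add_divide_distrib)
  then show ?thesis
    unfolding dyadic_grid_def by blast
qed

lemma grid_point_in_setB_iff:
  fixes k N :: int
  shows "of_int k / 2 ^ p \<in> setB p (of_int N / 2 ^ p) \<longleftrightarrow> -N \<le> k \<and> k < N"
proof -
  have "- (of_int N / 2 ^ p) = (of_int (-N) / 2 ^ p :: real)"
    by simp
  then have "- (of_int N / 2 ^ p) \<le> (of_int k / 2 ^ p :: real) \<longleftrightarrow> -N \<le> k"
    by (simp only: divide_le_cancel of_int_le_iff) simp
  moreover have "(of_int k / 2 ^ p \<le> (of_int N / 2 ^ p :: real)) \<longleftrightarrow> k \<le> N"
    by (simp add: divide_le_cancel)
  moreover have "(of_int k / 2 ^ p = (of_int N / 2 ^ p :: real)) \<longleftrightarrow> k = N"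
    by simp
  moreover have "of_int k / 2 ^ p \<in> dyadic_grid p"
    unfolding dyadic_grid_def by blast
  ultimately show ?thesis
    unfolding setB_def setA_def by auto
qed

lemma setB_eq_image_grid:
  fixes N :: int
  shows "setB p (of_int N / 2 ^ p) = (\<lambda>k. of_int k / 2 ^ p) ` {-N..<N}"
proof (intro set_eqI iffI)
  fix y
  assume y: "y \<in> setB p (of_int N / 2 ^ p)"
  then obtain k :: int where "y = of_int k / 2 ^ p"
    by (auto simp: setB_def setA_def dyadic_grid_def)
  with y show "y \<in> (\<lambda>k. of_int k / 2 ^ p) ` {-N..<N}"
    using grid_point_in_setB_iff by auto
qed (use grid_point_in_setB_iff in auto)

lemma sum_setB_bins_eq_integral:
  fixes f :: "real \<Rightarrow> real" and B :: real
  assumes "B \<in> dyadic_grid p" "B \<ge> 0" and "\<And>u v. f integrable_on {u..v}"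
  shows "(\<Sum>y\<in>setB p B. integral {y..y + 1 / 2 ^ p} f) = integral {-B..B} f"
proof -
  obtain N :: int where B: "B = of_int N / 2 ^ p"
    using assms(1) unfolding dyadic_grid_def by auto
  have "N \<ge> 0"
    using assms(2) by (simp add: B le_divide_eq)
  have inj: "inj_on (\<lambda>k. of_int k / 2 ^ p :: real) {-N..<N}"
    by (auto simp: inj_on_def)
  have "(\<Sum>y\<in>setB p B. integral {y..y + 1 / 2 ^ p} f)
      = (\<Sum>k\<in>{-N..<-N + int (nat (2 * N))}.
           integral {of_int k / 2 ^ p .. of_int k / 2 ^ p + 1 / 2 ^ p} f)"
    unfolding B setB_eq_image_grid sum.reindex[OF inj] o_def
    using \<open>N \<ge> 0\<close> by (simp add: nat_mult_distrib)
  also have "\<dots> = integral {of_int (-N) / 2 ^ p .. (of_int (-N) + real (nat (2 * N))) / 2 ^ p} f"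
    by (rule sum_integral_consecutive_bins[OF _ assms(3)]) simp
  also have "\<dots> = integral {-B..B} f"
    using \<open>N \<ge> 0\<close> by (simp add: B)
  finally show ?thesis .
qed

lemma integral_clap_density:
  fixes L B \<sigma> x :: real
  assumes "L \<ge> 0" "\<bar>x\<bar> + L \<le> B"
  shows "integral {-B..B} (clap_density L \<sigma> x)
       = 2 * (B - L) * exp (- L / \<sigma>) + integral {-L..L} (clap_density L \<sigma> 0)"
proof -
  let ?g = "clap_density L \<sigma> x" and ?c = "exp (- L / \<sigma>)"
  have window: "-B \<le> x - L" "x + L \<le> B"
    using assms by auto
  have "integral {-B..B} ?g = integral {-B..x - L} ?g + integral {x - L..B} ?g"
    by (rule Henstock_Kurzweil_Integration.integral_combine[symmetric])
      (use assms in \<open>auto intro: clap_density_integrable\<close>)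
  also have "integral {x - L..B} ?g = integral {x - L..x + L} ?g + integral {x + L..B} ?g"
    by (rule Henstock_Kurzweil_Integration.integral_combine[symmetric])
      (use assms in \<open>auto intro: clap_density_integrable\<close>)
  also have "integral {-B..x - L} ?g = integral {-B..x - L} (\<lambda>_. ?c)"
    by (rule integral_cong) (auto simp: clap_density_def min_def)
  also have "integral {x + L..B} ?g = integral {x + L..B} (\<lambda>_. ?c)"
    by (rule integral_cong) (auto simp: clap_density_def min_def)
  also have "integral {x - L..x + L} ?g = integral {-L..L} (clap_density L \<sigma> 0)"
  proof -
    have "?g \<circ> (+) x = clap_density L \<sigma> 0"
      by (simp add: clap_density_def fun_eq_iff)
    then show ?thesis
      using integral_shift_Icc_real[of "-L" L ?g x] by (simp add: add.commute)
  qed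
  finally show ?thesis
    using window by (simp add: algebra_simps)
qed

lemma clap_lambda_eq_integral:
  assumes "L + E \<in> dyadic_grid p" "L + E \<ge> 0"
  shows "clap_lambda L E \<sigma> p x = integral {-(L + E)..L + E} (clap_density L \<sigma> x)"
  unfolding clap_lambda_def clap_mass_eq_integral_density
  by (rule sum_setB_bins_eq_integral[OF assms clap_density_integrable])

lemma clap_lambda_eq:
  fixes L E \<sigma> :: real
  assumes "L \<ge> 0" "L \<in> dyadic_grid p" "E \<in> dyadic_grid p" "x \<in> setA p E"
  shows "clap_lambda L E \<sigma> p x = 2 * E * exp (- L / \<sigma>) + integral {-L..L} (clap_density L \<sigma> 0)"
proof -
  have "\<bar>x\<bar> + L \<le> L + E"
    using assms(4) by (auto simp: setA_def)
  have "clap_lambda L E \<sigma> p x = integral {-(L + E)..L + E} (clap_density L \<sigma> x)"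
    using \<open>\<bar>x\<bar> + L \<le> L + E\<close> assms(1-3)
    by (intro clap_lambda_eq_integral dyadic_grid_add) auto
  also have "\<dots> = 2 * (L + E - L) * exp (- L / \<sigma>) + integral {-L..L} (clap_density L \<sigma> 0)"
    using \<open>\<bar>x\<bar> + L \<le> L + E\<close> assms(1) by (rule integral_clap_density[rotated])
  finally show ?thesis
    by simp
qed

theorem mainTheorem9:
  fixes p :: nat and L E \<sigma> \<epsilon> :: real
  assumes "p > 0"
    and "L > 0" and "E > 0" and "\<sigma> > 0"
    and "L \<in> dyadic_grid p" and "E \<in> dyadic_grid p"
    and "\<epsilon> > 0" and "\<sigma> \<ge> L / \<epsilon>"
  shows "\<forall>x1\<in>setA p E. \<forall>x2\<in>setA p E. \<forall>y\<in>setB p (L + E).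
           clap_f L E \<sigma> p x1 y \<le> exp \<epsilon> * clap_f L E \<sigma> p x2 y"
proof (intro ballI)
  fix x1 x2 y
  assume x1: "x1 \<in> setA p E" and x2: "x2 \<in> setA p E"
  have "L / \<sigma> \<le> \<epsilon>"
    using assms by (simp add: divide_le_eq mult.commute)
  have "clap_mass L \<sigma> p x1 y \<le> exp (L / \<sigma>) * clap_mass L \<sigma> p x2 y"
    using assms(2,4) by (simp add: clap_mass_le_exp_mult)
  also have "\<dots> \<le> exp \<epsilon> * clap_mass L \<sigma> p x2 y"
    using \<open>L / \<sigma> \<le> \<epsilon>\<close> by (intro mult_right_mono clap_mass_nonneg) simp
  finally have "clap_mass L \<sigma> p x1 y \<le> exp \<epsilon> * clap_mass L \<sigma> p x2 y" .
  moreover have "clap_lambda L E \<sigma> p x1 = clap_lambda L E \<sigma> p x2"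
    using assms(2,5,6) x1 x2 by (simp add: clap_lambda_eq)
  moreover have "clap_lambda L E \<sigma> p x2 \<ge> 0"
    unfolding clap_lambda_def by (intro sum_nonneg clap_mass_nonneg)
  ultimately show "clap_f L E \<sigma> p x1 y \<le> exp \<epsilon> * clap_f L E \<sigma> p x2 y"
    unfolding clap_f_def by (simp add: divide_right_mono)
qed

end
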